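(* Every finite twin-free interval order $P=(X,\prec)$ has a closed interval representation $\{I(x)=[L(x),R(x)]:x\in X\}$ satisfying the following peeking property: for each pair $u,v\in X$ with $I(u)\subsetneq I(v)$, there exist $x,y\in X$ such that $x$ peeks into $vu$ from the left and $y$ peeks into $vu$ from the right.
   Context: Posets are strict (irreflexive) partial orders. Two points are twins if they have exactly the same comparabilities; $P$ is twin-free if no two distinct points are twins. $P$ is an interval order if there is an assignment of a closed real interval $I(x)=[L(x),R(x)]$ to each $x\in X$ (a closed interval representation) such that $x\prec y$ if and only if $R(x)<L(y)$. Given a representation and $u,v,x\in X$ with $I(u)\subsetneq I(v)$: $x$ peeks into $vu$ if $I(x)$ intersects $I(v)$ but not $I(u)$; it peeks into $vu$ from the left if moreover $R(x)\le L(u)$, and from the right if moreover $R(u)\le L(x)$. *)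

theory Defs
  imports Complex_Main
begin

definition strict_poset :: "'a set \<Rightarrow> ('a \<Rightarrow> 'a \<Rightarrow> bool) \<Rightarrow> bool" where
  "strict_poset X prec \<longleftrightarrow>
     (\<forall>x\<in>X. \<not> prec x x) \<and>
     (\<forall>x\<in>X. \<forall>y\<in>X. \<forall>z\<in>X. prec x y \<longrightarrow> prec y z \<longrightarrow> prec x z)"

definition twins :: "'a set \<Rightarrow> ('a \<Rightarrow> 'a \<Rightarrow> bool) \<Rightarrow> 'a \<Rightarrow> 'a \<Rightarrow> bool" where
  "twins X prec x y \<longleftrightarrow>
     (\<forall>z\<in>X. (prec z x \<longleftrightarrow> prec z y) \<and> (prec x z \<longleftrightarrow> prec y z))"

definition twin_free :: "'a set \<Rightarrow> ('a \<Rightarrow> 'a \<Rightarrow> bool) \<Rightarrow> bool" where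
  "twin_free X prec \<longleftrightarrow> (\<forall>x\<in>X. \<forall>y\<in>X. twins X prec x y \<longrightarrow> x = y)"

definition ival :: "('a \<Rightarrow> real) \<Rightarrow> ('a \<Rightarrow> real) \<Rightarrow> 'a \<Rightarrow> real set" where
  "ival L R x = {L x .. R x}"

definition interval_rep :: "'a set \<Rightarrow> ('a \<Rightarrow> 'a \<Rightarrow> bool) \<Rightarrow> ('a \<Rightarrow> real) \<Rightarrow> ('a \<Rightarrow> real) \<Rightarrow> bool" where
  "interval_rep X prec L R \<longleftrightarrow>
     (\<forall>x\<in>X. L x \<le> R x) \<and>
     (\<forall>x\<in>X. \<forall>y\<in>X. prec x y \<longleftrightarrow> R x < L y)"

definition interval_order :: "'a set \<Rightarrow> ('a \<Rightarrow> 'a \<Rightarrow> bool) \<Rightarrow> bool" where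
  "interval_order X prec \<longleftrightarrow> strict_poset X prec \<and> (\<exists>L R. interval_rep X prec L R)"

definition peeks :: "('a \<Rightarrow> real) \<Rightarrow> ('a \<Rightarrow> real) \<Rightarrow> 'a \<Rightarrow> 'a \<Rightarrow> 'a \<Rightarrow> bool" where
  "peeks L R x v u \<longleftrightarrow>
     ival L R x \<inter> ival L R v \<noteq> {} \<and> ival L R x \<inter> ival L R u = {}"

definition peeks_left :: "('a \<Rightarrow> real) \<Rightarrow> ('a \<Rightarrow> real) \<Rightarrow> 'a \<Rightarrow> 'a \<Rightarrow> 'a \<Rightarrow> bool" where
  "peeks_left L R x v u \<longleftrightarrow> peeks L R x v u \<and> R x \<le> L u"

definition peeks_right :: "('a \<Rightarrow> real) \<Rightarrow> ('a \<Rightarrow> real) \<Rightarrow> 'a \<Rightarrow> 'a \<Rightarrow> 'a \<Rightarrow> bool" where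
  "peeks_right L R x v u \<longleftrightarrow> peeks L R x v u \<and> R u \<le> L x"

end

theory Submission
  imports Defs
begin

text \<open>Take the canonical representation in which the left endpoint of \<open>y\<close> is the number of
  predecessors of \<open>y\<close> and the right endpoint of \<open>x\<close> is the largest left endpoint of an
  element not above \<open>x\<close>. Perturbing both endpoints by a small multiple of the other endpoint
  breaks ties, so a strict containment \<open>I(u) \<subset> I(v)\<close> forces both integer endpoints of \<open>u\<close>
  strictly inside those of \<open>v\<close>. Then some predecessor of \<open>u\<close> is not a predecessor of \<open>v\<close>,
  and it peeks from the left; an element realising the right endpoint of \<open>v\<close> lies above \<open>u\<close>
  but not above \<open>v\<close>, and it peeks from the right.\<close>

lemma peeks_left_if_below_only_inner:
  assumes rep: "interval_rep X prec L R"
    and X: "x \<in> X" "u \<in> X" "v \<in> X"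
    and sub: "ival L R u \<subseteq> ival L R v"
    and "prec x u" "\<not> prec x v"
  shows "peeks_left L R x v u"
proof -
  have le: "L x \<le> R x" "L u \<le> R u" "L v \<le> R v" using rep X unfolding interval_rep_def by auto
  have below_u: "R x < L u" and reaches_v: "L v \<le> R x"
    using rep X \<open>prec x u\<close> \<open>\<not> prec x v\<close> unfolding interval_rep_def by auto
  have "R u \<le> R v" using sub le(2) unfolding ival_def by auto
  then have "max (L x) (L v) \<in> ival L R x \<inter> ival L R v"
    using le below_u reaches_v unfolding ival_def by auto
  then show ?thesis
    using below_u unfolding peeks_left_def peeks_def ival_def by auto
qed

lemma peeks_right_if_above_only_inner:
  assumes rep: "interval_rep X prec L R"
    and X: "y \<in> X" "u \<in> X" "v \<in> X"
    and sub: "ival L R u \<subseteq> ival L R v"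
    and "prec u y" "\<not> prec v y"
  shows "peeks_right L R y v u"
proof -
  have le: "L y \<le> R y" "L u \<le> R u" "L v \<le> R v" using rep X unfolding interval_rep_def by auto
  have above_u: "R u < L y" and reaches_v: "L y \<le> R v"
    using rep X \<open>prec u y\<close> \<open>\<not> prec v y\<close> unfolding interval_rep_def by auto
  have "L v \<le> L u" using sub le(2) unfolding ival_def by auto
  then have "L y \<in> ival L R y \<inter> ival L R v"
    using le above_u reaches_v unfolding ival_def by auto
  then show ?thesis
    using above_u unfolding peeks_right_def peeks_def ival_def by auto
qed

lemma scaled_nat_bound:
  fixes d c :: real and k N :: nat
  assumes "0 < d" "d * N < c" "k \<le> N"
  shows "0 \<le> d * k" "d * k < c"
proof -
  have "d * k \<le> d * N" using assms by (simp add: mult_left_mono)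
  then show "0 \<le> d * k" "d * k < c" using assms by (simp, linarith)
qed

lemma perturbed_endpoint_less_iff:
  fixes r l a b N :: nat and d :: real
  assumes "0 < d" "d * N < 1/4" "a \<le> N" "b \<le> N"
  shows "real r + 1/2 + d * a < real l + d * b \<longleftrightarrow> r < l"
proof -
  have small: "0 \<le> d * a" "d * a < 1/4" "0 \<le> d * b" "d * b < 1/4"
    using scaled_nat_bound[OF assms(1,2)] assms(3,4) by auto
  show ?thesis
  proof
    assume "r < l"
    then have "real r + 1 \<le> real l" by linarith
    then show "real r + 1/2 + d * a < real l + d * b" using small by linarith
  next
    assume "real r + 1/2 + d * a < real l + d * b"
    then show "r < l" using small by (cases "r < l") auto
  qed
qed

lemma perturbed_psubset_imp_strictly_inside:
  fixes a b c e N :: nat and d :: real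
  assumes "0 < d" "d * N < 1/4" "a \<le> b" "b \<le> N" "e \<le> N"
    and psub: "{a + d * b .. b + 1/2 + d * a} \<subset> {c + d * e .. e + 1/2 + d * c}"
  shows "c < a \<and> b < e"
proof -
  have small: "0 \<le> d * k" "d * k < 1/4" if "k \<le> N" for k
    using scaled_nat_bound[OF assms(1,2) that] by auto
  have "real a + d * b \<le> real b + 1/2 + d * a"
    using assms(3,4) small(2)[of b] small(1)[of a] by simp
  then have left: "c + d * e \<le> a + d * b" and right: "b + 1/2 + d * a \<le> e + 1/2 + d * c"
    using psub by auto
  have "c \<le> a"
  proof (rule ccontr)
    assume "\<not> c \<le> a"
    then have "real a + 1 \<le> real c" by linarith
    then show False using left small[of b] small[of e] \<open>b \<le> N\<close> \<open>e \<le> N\<close> by linarith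
  qed
  have "b \<le> e"
  proof (rule ccontr)
    assume "\<not> b \<le> e"
    then have "real e + 1 \<le> real b" by linarith
    then show False using right small[of a] small[of c] \<open>c \<le> a\<close> assms(3,4) by linarith
  qed
  have "c \<noteq> a"
  proof
    assume "c = a"
    then have "e \<le> b" using left \<open>0 < d\<close> by simp
    with \<open>b \<le> e\<close> \<open>c = a\<close> show False using psub by auto
  qed
  moreover have "b \<noteq> e"
  proof
    assume "b = e"
    then have "a \<le> c" using right \<open>0 < d\<close> by simp
    with \<open>c \<le> a\<close> \<open>b = e\<close> show False using psub by auto
  qed
  ultimately show ?thesis using \<open>c \<le> a\<close> \<open>b \<le> e\<close> by simp
qed

locale finite_interval_order =
  fixes X :: "'a set" and prec :: "'a \<Rightarrow> 'a \<Rightarrow> bool"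
  assumes finite_X: "finite X"
    and has_rep: "\<exists>L R. interval_rep X prec L R"
begin

definition down :: "'a \<Rightarrow> 'a set" where
  "down y = {w \<in> X. prec w y}"

definition left_rank :: "'a \<Rightarrow> nat" where
  "left_rank y = card (down y)"

definition right_rank :: "'a \<Rightarrow> nat" where
  "right_rank x = Max (left_rank ` {z \<in> X. \<not> prec x z})"

lemma irrefl: "x \<in> X \<Longrightarrow> \<not> prec x x"
  using has_rep unfolding interval_rep_def by force

lemma down_chain: "z \<in> X \<Longrightarrow> y \<in> X \<Longrightarrow> down z \<subseteq> down y \<or> down y \<subseteq> down z"
proof -
  obtain L R where "interval_rep X prec L R" using has_rep by blast
  then have "\<forall>w\<in>X. \<forall>y\<in>X. prec w y \<longleftrightarrow> R w < L y" unfolding interval_rep_def by blast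
  then show "z \<in> X \<Longrightarrow> y \<in> X \<Longrightarrow> ?thesis"
    unfolding down_def by (cases "L z \<le> L y") auto
qed

lemma left_rank_le_card: "left_rank y \<le> card X"
  unfolding left_rank_def down_def using finite_X by (simp add: card_mono)

lemma right_rank_attained: "x \<in> X \<Longrightarrow> \<exists>z\<in>X. \<not> prec x z \<and> left_rank z = right_rank x"
proof -
  assume "x \<in> X"
  then have "left_rank ` {z \<in> X. \<not> prec x z} \<noteq> {}" using irrefl by blast
  then have "right_rank x \<in> left_rank ` {z \<in> X. \<not> prec x z}"
    unfolding right_rank_def using finite_X by (intro Max_in) auto
  then show ?thesis by auto
qed

lemma left_rank_le_right_rank_of:
  "z \<in> X \<Longrightarrow> \<not> prec x z \<Longrightarrow> left_rank z \<le> right_rank x"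
  unfolding right_rank_def using finite_X by (intro Max_ge) auto

lemma right_rank_le_card: "x \<in> X \<Longrightarrow> right_rank x \<le> card X"
  using right_rank_attained left_rank_le_card by metis

lemma left_rank_le_right_rank: "x \<in> X \<Longrightarrow> left_rank x \<le> right_rank x"
  using left_rank_le_right_rank_of irrefl by blast

lemma prec_iff_right_rank_less:
  assumes "x \<in> X" "y \<in> X"
  shows "prec x y \<longleftrightarrow> right_rank x < left_rank y"
proof
  assume "prec x y"
  obtain z where z: "z \<in> X" "\<not> prec x z" "left_rank z = right_rank x"
    using right_rank_attained assms(1) by blast
  have "x \<in> down y" "x \<notin> down z" using \<open>prec x y\<close> z assms unfolding down_def by auto
  then have "down z \<subset> down y" using down_chain[OF \<open>z \<in> X\<close> \<open>y \<in> X\<close>] by blast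
  then have "card (down z) < card (down y)"
    using finite_X unfolding down_def by (intro psubset_card_mono) auto
  then show "right_rank x < left_rank y" using z unfolding left_rank_def by simp
next
  assume "right_rank x < left_rank y"
  then show "prec x y" using left_rank_le_right_rank_of[OF \<open>y \<in> X\<close>] by force
qed

definition eps :: real where
  "eps = 1 / (4 * (real (card X) + 1))"

lemma eps_pos: "0 < eps"
  unfolding eps_def by simp

lemma eps_small: "eps * card X < 1/4"
  unfolding eps_def by (simp add: divide_simps)

definition L :: "'a \<Rightarrow> real" where
  "L x = left_rank x + eps * right_rank x"

definition R :: "'a \<Rightarrow> real" where
  "R x = right_rank x + 1/2 + eps * left_rank x"

lemma canonical_rep: "interval_rep X prec L R"
proof -
  have "L x \<le> R x" if "x \<in> X" for x
  proof -
    have "eps * right_rank x < 1/4"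
      using scaled_nat_bound(2)[OF eps_pos eps_small right_rank_le_card[OF that]] .
    moreover have "0 \<le> eps * left_rank x"
      using scaled_nat_bound(1)[OF eps_pos eps_small left_rank_le_card] .
    ultimately show ?thesis
      using left_rank_le_right_rank[OF that] unfolding L_def R_def by linarith
  qed
  moreover have "prec x y \<longleftrightarrow> R x < L y" if "x \<in> X" "y \<in> X" for x y
    unfolding L_def R_def prec_iff_right_rank_less[OF that]
    using perturbed_endpoint_less_iff[OF eps_pos eps_small
        left_rank_le_card[of x] right_rank_le_card[OF \<open>y \<in> X\<close>]] by simp
  ultimately show ?thesis unfolding interval_rep_def by blast
qed

lemma canonical_psubset_imp_ranks_strict:
  assumes "u \<in> X" "v \<in> X" "ival L R u \<subset> ival L R v"
  shows "left_rank v < left_rank u \<and> right_rank u < right_rank v"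
  using assms(3) unfolding ival_def L_def R_def
  by (intro perturbed_psubset_imp_strictly_inside[OF eps_pos eps_small
        left_rank_le_right_rank right_rank_le_card right_rank_le_card]) (use assms in auto)

lemma canonical_peekers:
  assumes u: "u \<in> X" and v: "v \<in> X" and psub: "ival L R u \<subset> ival L R v"
  shows "\<exists>x\<in>X. \<exists>y\<in>X. peeks_left L R x v u \<and> peeks_right L R y v u"
proof -
  note ranks = canonical_psubset_imp_ranks_strict[OF u v psub]
  have "\<not> down u \<subseteq> down v"
    using ranks finite_X card_mono[of "down v" "down u"] unfolding left_rank_def down_def by force
  then obtain x where x: "x \<in> X" "prec x u" "\<not> prec x v" unfolding down_def by blast
  obtain y where y: "y \<in> X" "\<not> prec v y" "left_rank y = right_rank v"
    using right_rank_attained[OF v] by blast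
  have "prec u y" using prec_iff_right_rank_less[OF u \<open>y \<in> X\<close>] ranks y(3) by simp
  have sub: "ival L R u \<subseteq> ival L R v" using psub by blast
  show ?thesis
    using peeks_left_if_below_only_inner[OF canonical_rep x(1) u v sub x(2,3)]
      peeks_right_if_above_only_inner[OF canonical_rep y(1) u v sub \<open>prec u y\<close> y(2)] x y
    by blast
qed

end

theorem theorem11:
  fixes X :: "'a set" and prec :: "'a \<Rightarrow> 'a \<Rightarrow> bool"
  assumes "finite X"
    and "interval_order X prec"
    and "twin_free X prec"
  shows "\<exists>L R. interval_rep X prec L R \<and>
           (\<forall>u\<in>X. \<forall>v\<in>X. ival L R u \<subset> ival L R v \<longrightarrow>
              (\<exists>x\<in>X. \<exists>y\<in>X. peeks_left L R x v u \<and> peeks_right L R y v u))"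
proof -
  interpret finite_interval_order X prec
    using assms(1,2) unfolding interval_order_def by unfold_locales blast+
  show ?thesis using canonical_rep canonical_peekers by blast
qed

end
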